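(* Let $G=(V,E)$ be a graph with $m\ge1$ edges and no isolated vertices. Then the in-degree distribution of any biased orientation of $G$ is an optimal solution of the linear program $$\min\ \sum_{v\in V} -p_v\log\frac{\deg(v)}{m}\quad\text{subject to } p\in P(G),$$ and the optimum value of this linear program is at most $\mathrm{OPT}(G)$.
   Context: All graphs are finite, undirected and loopless, multiple edges allowed. For $S\subseteq V$, $e(S)$ is the fraction of edges of $G$ incident to at least one vertex of $S$, and $p(S):=\sum_{v\in S}p_v$. $P(G):=\{p\in\mathbb{R}^V : p(S)\le e(S)\ \forall S\subseteq V,\ p(V)=1\}$. For an orientation $\vec G$, the in-degree distribution is $p_v:=\rho_{\vec G}(v)/m$ with $\rho_{\vec G}(v)$ the in-degree of $v$. Entropy $H(p):=\sum_v -p_v\log p_v$ ($\log$ base $2$, $-0\log0:=0$); $\mathrm{OPT}(G)$ is the minimum entropy of the in-degree distribution of an orientation of $G$. An orientation is biased if each edge $vw$ with $\deg(v)>\deg(w)$ is oriented toward $v$. *)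

theory Defs
  imports Complex_Main
begin

definition multigraph :: "'v set \<Rightarrow> 'e set \<Rightarrow> ('e \<Rightarrow> 'v \<times> 'v) \<Rightarrow> bool" where
  "multigraph V E ends \<longleftrightarrow> finite V \<and> finite E \<and>
     (\<forall>e\<in>E. fst (ends e) \<in> V \<and> snd (ends e) \<in> V \<and> fst (ends e) \<noteq> snd (ends e))"

definition incident :: "('e \<Rightarrow> 'v \<times> 'v) \<Rightarrow> 'v \<Rightarrow> 'e \<Rightarrow> bool" where
  "incident ends v e \<longleftrightarrow> v = fst (ends e) \<or> v = snd (ends e)"

definition deg :: "'e set \<Rightarrow> ('e \<Rightarrow> 'v \<times> 'v) \<Rightarrow> 'v \<Rightarrow> nat" where
  "deg E ends v = card {e\<in>E. incident ends v e}"

definition edge_frac :: "'e set \<Rightarrow> ('e \<Rightarrow> 'v \<times> 'v) \<Rightarrow> 'v set \<Rightarrow> real" where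
  "edge_frac E ends S = real (card {e\<in>E. \<exists>v\<in>S. incident ends v e}) / real (card E)"

definition polytopeP :: "'v set \<Rightarrow> 'e set \<Rightarrow> ('e \<Rightarrow> 'v \<times> 'v) \<Rightarrow> ('v \<Rightarrow> real) set" where
  "polytopeP V E ends = {p. (\<forall>S\<subseteq>V. sum p S \<le> edge_frac E ends S) \<and> sum p V = 1}"

text \<open>An orientation points each edge towards one of its endpoints (its head);
  off E it is fixed to undefined so that the set of orientations is finite.\<close>
definition orientations :: "'e set \<Rightarrow> ('e \<Rightarrow> 'v \<times> 'v) \<Rightarrow> ('e \<Rightarrow> 'v) set" where
  "orientations E ends = {h. (\<forall>e\<in>E. incident ends (h e) e) \<and> (\<forall>e. e \<notin> E \<longrightarrow> h e = undefined)}"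

definition indeg :: "'e set \<Rightarrow> ('e \<Rightarrow> 'v) \<Rightarrow> 'v \<Rightarrow> nat" where
  "indeg E h v = card {e\<in>E. h e = v}"

definition indeg_dist :: "'e set \<Rightarrow> ('e \<Rightarrow> 'v) \<Rightarrow> 'v \<Rightarrow> real" where
  "indeg_dist E h v = real (indeg E h v) / real (card E)"

definition entropy :: "'v set \<Rightarrow> ('v \<Rightarrow> real) \<Rightarrow> real" where
  "entropy V p = (\<Sum>v\<in>V. if p v = 0 then 0 else - p v * log 2 (p v))"

definition OPT :: "'v set \<Rightarrow> 'e set \<Rightarrow> ('e \<Rightarrow> 'v \<times> 'v) \<Rightarrow> real" where
  "OPT V E ends = Min ((\<lambda>h. entropy V (indeg_dist E h)) ` orientations E ends)"

definition biased :: "'e set \<Rightarrow> ('e \<Rightarrow> 'v \<times> 'v) \<Rightarrow> ('e \<Rightarrow> 'v) \<Rightarrow> bool" where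
  "biased E ends h \<longleftrightarrow> (\<forall>e\<in>E. \<forall>v w. (ends e = (v, w) \<or> ends e = (w, v)) \<longrightarrow>
       deg E ends v > deg E ends w \<longrightarrow> h e = v)"

definition lp_obj :: "'v set \<Rightarrow> 'e set \<Rightarrow> ('e \<Rightarrow> 'v \<times> 'v) \<Rightarrow> ('v \<Rightarrow> real) \<Rightarrow> real" where
  "lp_obj V E ends p = (\<Sum>v\<in>V. - p v * log 2 (real (deg E ends v) / real (card E)))"

definition lp_value :: "'v set \<Rightarrow> 'e set \<Rightarrow> ('e \<Rightarrow> 'v \<times> 'v) \<Rightarrow> real" where
  "lp_value V E ends = Inf (lp_obj V E ends ` polytopeP V E ends)"

end

theory Submission
  imports Defs "HOL-Library.FuncSet"
begin

(* Write c v = - log (deg v / m) for the cost of vertex v, so the LP objective is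
   the weighted sum of c against p.  For a biased orientation h with in-degree distribution q,
   every sublevel set S = {v. c v <= t} consists of all vertices of degree above some bound;
   biasedness forces every edge touching S to point into S, so q(S) = e(S) >= p(S) for every
   p in P(G).  A discrete "layer-cake" argument then shows that a distribution q dominating p
   on all sublevel sets of c (with equal total mass) has smaller c-weighted sum.  The theorem
   follows: q is feasible and optimal, hence attains the LP value, and comparing with an
   entropy-minimising orientation bounds the LP value by OPT(G). *)

lemma sum_mult_split_at_level:
  fixes r c :: "'a \<Rightarrow> real"
  assumes fin: "finite V" and two_levels: "\<And>v. v \<in> V \<Longrightarrow> c v \<le> s \<or> c v = M"
  shows "(\<Sum>v\<in>V. r v * c v)
           = (\<Sum>v\<in>V. r v * min (c v) s) + (M - s) * (sum r V - sum r {v\<in>V. c v \<le> s})"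
proof -
  have pointwise: "r v * c v = r v * min (c v) s + (M - s) * (r v - (if c v \<le> s then r v else 0))"
    if "v \<in> V" for v
    using two_levels[OF that] by (auto simp: algebra_simps)
  have "(\<Sum>v\<in>V. if c v \<le> s then r v else 0) = sum r {v\<in>V. c v \<le> s}"
    using fin by (simp add: sum.inter_filter)
  then show ?thesis
    by (simp add: sum.cong[OF refl pointwise] sum.distrib sum_distrib_left[symmetric] sum_subtractf)
qed

(* Induction on the number of
   distinct values of c, truncating the top value. *)
lemma weighted_sum_le_of_sublevel_dominance:
  fixes p q c :: "'a \<Rightarrow> real"
  assumes fin: "finite V" and same_total: "sum p V = sum q V"
    and dominance: "\<And>t. sum p {v\<in>V. c v \<le> t} \<le> sum q {v\<in>V. c v \<le> t}"
  shows "(\<Sum>v\<in>V. q v * c v) \<le> (\<Sum>v\<in>V. p v * c v)"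
  using dominance
proof (induction "card (c ` V)" arbitrary: c rule: less_induct)
  case less
  show ?case
  proof (cases "\<exists>a. \<forall>v\<in>V. c v = a")
    case True
    then obtain a where "\<forall>v\<in>V. c v = a" by blast
    then show ?thesis using same_total by (simp add: sum_distrib_right[symmetric])
  next
    case False
    define M where "M = Max (c ` V)"
    define lower where "lower = c ` V - {M}"
    define s where "s = Max lower"
    have "V \<noteq> {}" using False by blast
    then have M_in: "M \<in> c ` V" and c_le_M: "\<And>v. v \<in> V \<Longrightarrow> c v \<le> M"
      using fin by (auto simp: M_def)
    have "lower \<noteq> {}" using False M_in by (auto simp: lower_def)
    moreover have "finite lower" using fin by (simp add: lower_def)
    ultimately have s_in: "s \<in> lower" and le_s: "\<And>x. x \<in> lower \<Longrightarrow> x \<le> s"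
      by (simp_all add: s_def)
    have s_lt_M: "s < M" using s_in c_le_M by (auto simp: lower_def order.order_iff_strict)
    have two_levels: "\<And>v. v \<in> V \<Longrightarrow> c v \<le> s \<or> c v = M"
      using le_s by (auto simp: lower_def)
    define c' where "c' = (\<lambda>v. min (c v) s)"
    have "c' ` V \<subseteq> lower"
      using two_levels s_in s_lt_M by (force simp: c'_def lower_def min_def)
    then have "card (c' ` V) \<le> card lower" using fin by (intro card_mono) (auto simp: lower_def)
    also have "\<dots> < card (c ` V)" unfolding lower_def using fin M_in by (intro card_Diff1_less) auto
    finally have fewer_levels: "card (c' ` V) < card (c ` V)" .
    have "sum p {v\<in>V. c' v \<le> t} \<le> sum q {v\<in>V. c' v \<le> t}" for t
    proof (cases "s \<le> t")
      case True
      then have "{v\<in>V. c' v \<le> t} = V" by (auto simp: c'_def)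
      then show ?thesis using same_total by simp
    next
      case False
      then have "{v\<in>V. c' v \<le> t} = {v\<in>V. c v \<le> t}" by (auto simp: c'_def)
      then show ?thesis using less.prems by simp
    qed
    then have IH: "(\<Sum>v\<in>V. q v * c' v) \<le> (\<Sum>v\<in>V. p v * c' v)"
      using less.hyps[OF fewer_levels] by blast
    have top_excess: "(M - s) * (sum q V - sum q {v\<in>V. c v \<le> s})
        \<le> (M - s) * (sum p V - sum p {v\<in>V. c v \<le> s})"
      using s_lt_M less.prems[of s] same_total by (intro mult_left_mono) auto
    have split: "(\<Sum>v\<in>V. r v * c v)
        = (\<Sum>v\<in>V. r v * c' v) + (M - s) * (sum r V - sum r {v\<in>V. c v \<le> s})" for r
      unfolding c'_def using fin two_levels by (rule sum_mult_split_at_level)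
    show ?thesis using IH top_excess split[of q] split[of p] by linarith
  qed
qed

definition lp_cost :: "'e set \<Rightarrow> ('e \<Rightarrow> 'v \<times> 'v) \<Rightarrow> 'v \<Rightarrow> real" where
  "lp_cost E ends v = - log 2 (real (deg E ends v) / real (card E))"

lemma lp_obj_eq_weighted_cost:
  "lp_obj V E ends p = (\<Sum>v\<in>V. p v * lp_cost E ends v)"
  unfolding lp_obj_def lp_cost_def by simp

lemma sum_indeg_dist:
  assumes "finite E" "finite S"
  shows "sum (indeg_dist E h) S = real (card {e\<in>E. h e \<in> S}) / real (card E)"
proof -
  have "{e\<in>E. h e \<in> S} = (\<Union>v\<in>S. {e\<in>E. h e = v})" by auto
  moreover have "card (\<Union>v\<in>S. {e\<in>E. h e = v}) = (\<Sum>v\<in>S. card {e\<in>E. h e = v})"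
    using assms by (intro card_UN_disjoint) auto
  ultimately show ?thesis
    unfolding indeg_dist_def indeg_def by (simp add: sum_divide_distrib[symmetric])
qed

(* Every orientation yields a point of P(G): edges with head in S are incident to S. *)
lemma indeg_dist_in_polytopeP:
  assumes mg: "multigraph V E ends" and m: "card E \<ge> 1"
    and orient: "\<forall>e\<in>E. incident ends (h e) e"
  shows "indeg_dist E h \<in> polytopeP V E ends"
proof -
  have finV: "finite V" and finE: "finite E" using mg unfolding multigraph_def by auto
  have "sum (indeg_dist E h) S \<le> edge_frac E ends S" if S: "S \<subseteq> V" for S
  proof -
    have "card {e\<in>E. h e \<in> S} \<le> card {e\<in>E. \<exists>v\<in>S. incident ends v e}"
      using finE orient by (intro card_mono) auto
    then show ?thesis
      unfolding sum_indeg_dist[OF finE finite_subset[OF S finV]] edge_frac_def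
      by (simp add: divide_right_mono)
  qed
  moreover have "{e\<in>E. h e \<in> V} = E"
    using orient mg unfolding multigraph_def incident_def by auto
  then have "sum (indeg_dist E h) V = 1"
    using m by (simp add: sum_indeg_dist[OF finE finV])
  ultimately show ?thesis unfolding polytopeP_def by simp
qed

definition degree_upset :: "'v set \<Rightarrow> 'e set \<Rightarrow> ('e \<Rightarrow> 'v \<times> 'v) \<Rightarrow> 'v set \<Rightarrow> bool" where
  "degree_upset V E ends S \<longleftrightarrow> S \<subseteq> V \<and>
     (\<forall>v\<in>S. \<forall>w\<in>V. deg E ends v \<le> deg E ends w \<longrightarrow> w \<in> S)"

(* Under a biased orientation, every edge touching a degree up-set S points into S,
   so the in-degree distribution meets the constraint for S with equality. *)
lemma biased_tight_on_degree_upset: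
  assumes mg: "multigraph V E ends"
    and orient: "\<forall>e\<in>E. incident ends (h e) e" and bias: "biased E ends h"
    and upset: "degree_upset V E ends S"
  shows "sum (indeg_dist E h) S = edge_frac E ends S"
proof -
  have finV: "finite V" and finE: "finite E" using mg unfolding multigraph_def by auto
  have SV: "S \<subseteq> V" using upset unfolding degree_upset_def by simp
  have head_in_S: "h e \<in> S" if e: "e \<in> E" and v: "v \<in> S" "incident ends v e" for e v
  proof (rule ccontr)
    assume out: "h e \<notin> S"
    obtain w where ends_vw: "ends e = (v, w) \<or> ends e = (w, v)" and head: "h e = w"
      using orient e v out unfolding incident_def by (cases "ends e") auto
    have "w \<in> V" using mg e ends_vw unfolding multigraph_def by force
    then have "deg E ends w < deg E ends v"
      using upset v out head unfolding degree_upset_def by force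
    then have "h e = v" using bias e ends_vw unfolding biased_def by blast
    then show False using out v by simp
  qed
  have "{e\<in>E. h e \<in> S} = {e\<in>E. \<exists>v\<in>S. incident ends v e}"
    using orient head_in_S by blast
  then show ?thesis
    unfolding sum_indeg_dist[OF finE finite_subset[OF SV finV]] edge_frac_def by simp
qed

(* Since the cost decreases with the degree, its sublevel sets are degree up-sets. *)
lemma lp_cost_sublevel_degree_upset:
  assumes m: "card E \<ge> 1" and no_isolated: "\<forall>v\<in>V. deg E ends v \<ge> 1"
  shows "degree_upset V E ends {v\<in>V. lp_cost E ends v \<le> t}"
  unfolding degree_upset_def
proof (intro conjI ballI impI)
  fix v w assume v: "v \<in> {v\<in>V. lp_cost E ends v \<le> t}" and w: "w \<in> V"
    and le: "deg E ends v \<le> deg E ends w"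
  have "real (deg E ends v) / real (card E) \<le> real (deg E ends w) / real (card E)"
    using le by (simp add: divide_right_mono)
  moreover have "real (deg E ends v) / real (card E) > 0"
    using no_isolated v m by auto
  ultimately have "lp_cost E ends w \<le> lp_cost E ends v" unfolding lp_cost_def by simp
  then show "w \<in> {v\<in>V. lp_cost E ends v \<le> t}" using v w by simp
qed auto

lemma biased_indeg_dist_lp_optimal:
  assumes mg: "multigraph V E ends" and m: "card E \<ge> 1"
    and no_isolated: "\<forall>v\<in>V. deg E ends v \<ge> 1"
    and orient: "\<forall>e\<in>E. incident ends (h e) e" and bias: "biased E ends h"
    and p: "p \<in> polytopeP V E ends"
  shows "lp_obj V E ends (indeg_dist E h) \<le> lp_obj V E ends p"
  unfolding lp_obj_eq_weighted_cost
proof (rule weighted_sum_le_of_sublevel_dominance)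
  show "finite V" using mg unfolding multigraph_def by simp
  show "sum p V = sum (indeg_dist E h) V"
    using p indeg_dist_in_polytopeP[OF mg m orient] unfolding polytopeP_def by simp
  fix t
  let ?S = "{v\<in>V. lp_cost E ends v \<le> t}"
  have "sum p ?S \<le> edge_frac E ends ?S" using p unfolding polytopeP_def by auto
  also have "\<dots> = sum (indeg_dist E h) ?S"
    using biased_tight_on_degree_upset[OF mg orient bias lp_cost_sublevel_degree_upset[OF m no_isolated]]
    by simp
  finally show "sum p ?S \<le> sum (indeg_dist E h) ?S" .
qed

(* Since p_v = rho(v)/m <= deg(v)/m and log is monotone, the LP objective of an in-degree
   distribution is a termwise lower bound for its entropy. *)
lemma lp_obj_le_entropy:
  assumes mg: "multigraph V E ends" and m: "card E \<ge> 1"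
    and orient: "\<forall>e\<in>E. incident ends (h e) e"
  shows "lp_obj V E ends (indeg_dist E h) \<le> entropy V (indeg_dist E h)"
  unfolding lp_obj_def entropy_def
proof (rule sum_mono)
  fix v assume "v \<in> V"
  let ?p = "indeg_dist E h v" and ?d = "real (deg E ends v) / real (card E)"
  have finE: "finite E" using mg unfolding multigraph_def by simp
  have "indeg E h v \<le> deg E ends v"
    unfolding indeg_def deg_def using finE orient by (intro card_mono) auto
  then have le: "?p \<le> ?d" unfolding indeg_dist_def by (simp add: divide_right_mono)
  have "log 2 ?p \<le> log 2 ?d" if "?p > 0" using that le by simp
  moreover have "?p \<ge> 0" unfolding indeg_dist_def by simp
  ultimately show "- ?p * log 2 ?d \<le> (if ?p = 0 then 0 else - ?p * log 2 ?p)"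
    by (auto simp: mult_left_mono)
qed

(* OPT(G) is attained by some orientation, as there are finitely many and at least one. *)
lemma OPT_attained:
  assumes "finite E"
  obtains h where "\<forall>e\<in>E. incident ends (h e) e" "OPT V E ends = entropy V (indeg_dist E h)"
proof -
  have "orientations E ends \<subseteq> (\<Pi>\<^sub>E e\<in>E. {fst (ends e), snd (ends e)})"
    unfolding orientations_def incident_def PiE_def extensional_def by auto
  moreover have "finite (\<Pi>\<^sub>E e\<in>E. {fst (ends e), snd (ends e)})"
    using assms by (intro finite_PiE) auto
  ultimately have "finite (orientations E ends)" by (rule finite_subset)
  moreover have "(\<lambda>e. if e \<in> E then fst (ends e) else undefined) \<in> orientations E ends"
    unfolding orientations_def incident_def by auto
  ultimately have "OPT V E ends \<in> (\<lambda>h. entropy V (indeg_dist E h)) ` orientations E ends"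
    unfolding OPT_def by (intro Min_in) auto
  then show thesis using that unfolding orientations_def by auto
qed

theorem mainTheorem7:
  fixes V :: "'v set" and E :: "'e set" and ends :: "'e \<Rightarrow> 'v \<times> 'v" and h :: "'e \<Rightarrow> 'v"
  assumes "multigraph V E ends"
    and "card E \<ge> 1"
    and "\<forall>v\<in>V. deg E ends v \<ge> 1"
    and "\<forall>e\<in>E. incident ends (h e) e"
    and "biased E ends h"
  shows "indeg_dist E h \<in> polytopeP V E ends
    \<and> (\<forall>p\<in>polytopeP V E ends. lp_obj V E ends (indeg_dist E h) \<le> lp_obj V E ends p)
    \<and> lp_value V E ends = lp_obj V E ends (indeg_dist E h)
    \<and> lp_value V E ends \<le> OPT V E ends"
proof -
  note mg = assms(1) and m = assms(2)
  have feasible: "indeg_dist E h \<in> polytopeP V E ends"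
    using indeg_dist_in_polytopeP[OF mg m assms(4)] .
  have optimal: "\<forall>p\<in>polytopeP V E ends. lp_obj V E ends (indeg_dist E h) \<le> lp_obj V E ends p"
    using biased_indeg_dist_lp_optimal[OF assms] by blast
  have attained: "lp_value V E ends = lp_obj V E ends (indeg_dist E h)"
    unfolding lp_value_def using feasible optimal by (intro cInf_eq_minimum) auto
  obtain h0 where orient0: "\<forall>e\<in>E. incident ends (h0 e) e"
    and opt0: "OPT V E ends = entropy V (indeg_dist E h0)"
    using OPT_attained mg unfolding multigraph_def by blast
  have "lp_value V E ends \<le> lp_obj V E ends (indeg_dist E h0)"
    using attained optimal indeg_dist_in_polytopeP[OF mg m orient0] by simp
  also have "\<dots> \<le> OPT V E ends"
    using opt0 lp_obj_le_entropy[OF mg m orient0] by simp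
  finally show ?thesis using feasible optimal attained by blast
qed

end
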